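(* Let $Q$ be a finite Moufang loop and let $d=2^a3^b>1$ with $a,b\ge 0$ integers. Then $Q$ is uniquely $d$-divisible if and only if $|Q|$ is coprime to $d$.
   Context: A loop is a magma with identity in which all left and right translations are bijections; it is Moufang if it satisfies $xy\cdot zx=(x\cdot yz)x$ (Moufang loops are power associative). A power associative loop is uniquely $d$-divisible if the map $x\mapsto x^d$ is a bijection. *)

theory Defs
  imports Main
begin

definition loop :: "'a set \<Rightarrow> ('a \<Rightarrow> 'a \<Rightarrow> 'a) \<Rightarrow> 'a \<Rightarrow> bool" where
  "loop Q m e \<longleftrightarrow> e \<in> Q \<and> (\<forall>x\<in>Q. \<forall>y\<in>Q. m x y \<in> Q)
     \<and> (\<forall>x\<in>Q. m e x = x \<and> m x e = x)
     \<and> (\<forall>a\<in>Q. bij_betw (\<lambda>x. m a x) Q Q \<and> bij_betw (\<lambda>x. m x a) Q Q)"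

definition moufang_loop :: "'a set \<Rightarrow> ('a \<Rightarrow> 'a \<Rightarrow> 'a) \<Rightarrow> 'a \<Rightarrow> bool" where
  "moufang_loop Q m e \<longleftrightarrow> loop Q m e \<and>
     (\<forall>x\<in>Q. \<forall>y\<in>Q. \<forall>z\<in>Q. m (m x y) (m z x) = m (m x (m y z)) x)"

text \<open>Powers x^n (well defined in power associative loops such as Moufang loops).\<close>
primrec loop_pow :: "('a \<Rightarrow> 'a \<Rightarrow> 'a) \<Rightarrow> 'a \<Rightarrow> 'a \<Rightarrow> nat \<Rightarrow> 'a" where
  "loop_pow m e x 0 = e"
| "loop_pow m e x (Suc n) = m (loop_pow m e x n) x"

definition uniquely_divisible :: "'a set \<Rightarrow> ('a \<Rightarrow> 'a \<Rightarrow> 'a) \<Rightarrow> 'a \<Rightarrow> nat \<Rightarrow> bool" where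
  "uniquely_divisible Q m e d \<longleftrightarrow> bij_betw (\<lambda>x. loop_pow m e x d) Q Q"

end

theory Submission
  imports Defs "HOL-Computational_Algebra.Primes"
begin

text \<open>Powers of a single element of a Moufang loop behave as in a group, because the right
Moufang law turns right translation by \<open>x\<^sup>n\<close> into the \<open>n\<close>-th iterate of right
translation by \<open>x\<close>. Hence the right translation by \<open>x\<close> permutes \<open>Q\<close> with all orbits of
size \<open>ord x\<close>, so \<open>ord x\<close> divides \<open>|Q|\<close>; if \<open>|Q|\<close> is coprime to \<open>d\<close>, Bezout then
provides \<open>d\<close>-th roots, and a surjective self-map of a finite set is bijective.

Conversely, let \<open>p \<in> {2, 3}\<close> divide both \<open>|Q|\<close> and \<open>d\<close>. The lists of length \<open>p\<close> whose
left-normed product is \<open>1\<close> number \<open>|Q| ^ (p - 1)\<close>, and for \<open>p \<le> 3\<close> the Moufang law makes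
them closed under rotation. Counting the fixed points of rotation modulo \<open>p\<close>, as in McKay's
proof of Cauchy's theorem, yields \<open>x \<noteq> 1\<close> with \<open>x\<^sup>p = 1\<close>, and then \<open>x\<^sup>d = 1\<^sup>d\<close>.\<close>

lemma funpow_gcd_fixpoint:
  fixes k n :: nat
  assumes "(f ^^ k) x = x" and "(f ^^ n) x = x"
  shows "(f ^^ gcd k n) x = x"
  using assms
proof (induction k n rule: gcd_nat_induct)
  case (step k n)
  then show ?case by (simp add: gcd_red_nat [of k] funpow_mod_eq)
qed simp

lemma funpow_closed:
  assumes "s ` X \<subseteq> X" and "x \<in> X"
  shows "(s ^^ k) x \<in> X"
  using assms by (induction k) auto

lemma inj_on_funpow_below_period:
  assumes period: "(s ^^ n) x = x"
    and exact: "\<And>k. 0 < k \<Longrightarrow> k < n \<Longrightarrow> (s ^^ k) x \<noteq> x"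
  shows "inj_on (\<lambda>k. (s ^^ k) x) {..<n}"
proof (rule linorder_inj_onI')
  fix i j assume "i \<in> {..<n}" "j \<in> {..<n}" "i < j"
  have "(s ^^ (n - j)) ((s ^^ i) x) = (s ^^ (n - j + i)) x"
    by (simp only: funpow_add comp_apply)
  also have "\<dots> \<noteq> x"
    using \<open>i < j\<close> \<open>j \<in> {..<n}\<close> by (intro exact) simp_all
  finally have i: "(s ^^ (n - j)) ((s ^^ i) x) \<noteq> x" .
  have "(s ^^ (n - j)) ((s ^^ j) x) = (s ^^ (n - j + j)) x"
    by (simp only: funpow_add comp_apply)
  also have "\<dots> = x"
    using \<open>j \<in> {..<n}\<close> period by simp
  finally show "(s ^^ i) x \<noteq> (s ^^ j) x"
    using i by metis
qed

definition funpow_orbit_rel :: "('a \<Rightarrow> 'a) \<Rightarrow> 'a set \<Rightarrow> ('a \<times> 'a) set" where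
  "funpow_orbit_rel s X = {(x, y). x \<in> X \<and> (\<exists>k. y = (s ^^ k) x)}"

lemma equiv_funpow_orbit_rel:
  assumes closed: "s ` X \<subseteq> X" and "0 < n"
    and period: "\<And>x. x \<in> X \<Longrightarrow> (s ^^ n) x = x"
  shows "equiv X (funpow_orbit_rel s X)"
proof (rule equivI)
  show "funpow_orbit_rel s X \<subseteq> X \<times> X"
    by (auto simp: funpow_orbit_rel_def intro: funpow_closed [OF closed])
  show "refl_on X (funpow_orbit_rel s X)"
    by (rule refl_onI) (auto simp: funpow_orbit_rel_def intro!: exI [of _ 0])
  show "sym (funpow_orbit_rel s X)"
  proof (rule symI)
    fix x y assume "(x, y) \<in> funpow_orbit_rel s X"
    then obtain k where x: "x \<in> X" and y: "y = (s ^^ k) x"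
      by (auto simp: funpow_orbit_rel_def)
    have "(s ^^ (n * k - k)) y = (s ^^ (n * k - k + k)) x"
      by (simp only: y funpow_add comp_apply)
    also have "\<dots> = x"
      using \<open>0 < n\<close> funpow_mod_eq [OF period [OF x], of "n * k"] by simp
    finally have "(s ^^ (n * k - k)) y = x" .
    moreover have "y \<in> X"
      using x y funpow_closed [OF closed] by simp
    ultimately show "(y, x) \<in> funpow_orbit_rel s X"
      unfolding funpow_orbit_rel_def by blast
  qed
  show "trans (funpow_orbit_rel s X)"
  proof (rule transI)
    fix x y z assume "(x, y) \<in> funpow_orbit_rel s X" "(y, z) \<in> funpow_orbit_rel s X"
    then obtain j k where "x \<in> X" "y = (s ^^ j) x" "z = (s ^^ k) y"
      by (auto simp: funpow_orbit_rel_def)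
    then have "x \<in> X" "z = (s ^^ (k + j)) x"
      by (simp_all add: funpow_add)
    then show "(x, z) \<in> funpow_orbit_rel s X"
      unfolding funpow_orbit_rel_def by blast
  qed
qed

lemma funpow_orbit_rel_class:
  assumes "x \<in> X" and "0 < n" and "(s ^^ n) x = x"
  shows "funpow_orbit_rel s X `` {x} = (\<lambda>k. (s ^^ k) x) ` {..<n}"
proof -
  have "(s ^^ k) x \<in> (\<lambda>k. (s ^^ k) x) ` {..<n}" for k
    using funpow_mod_eq [OF assms(3), of k] \<open>0 < n\<close> by (intro image_eqI [of _ _ "k mod n"]) auto
  then show ?thesis
    using \<open>x \<in> X\<close> by (auto simp: funpow_orbit_rel_def)
qed

lemma period_dvd_card:
  assumes fin: "finite X" and closed: "s ` X \<subseteq> X" and "0 < n"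
    and period: "\<And>x. x \<in> X \<Longrightarrow> (s ^^ n) x = x"
    and exact: "\<And>x k. x \<in> X \<Longrightarrow> 0 < k \<Longrightarrow> k < n \<Longrightarrow> (s ^^ k) x \<noteq> x"
  shows "n dvd card X"
proof (rule equiv_imp_dvd_card [OF fin equiv_funpow_orbit_rel [OF closed \<open>0 < n\<close> period]])
  fix C assume "C \<in> X // funpow_orbit_rel s X"
  then obtain x where x: "x \<in> X" and C: "C = funpow_orbit_rel s X `` {x}"
    by (auto elim: quotientE)
  have "inj_on (\<lambda>k. (s ^^ k) x) {..<n}"
    using period [OF x] exact [OF x] by (rule inj_on_funpow_below_period)
  then show "n dvd card C"
    using funpow_orbit_rel_class [OF x \<open>0 < n\<close> period [OF x]] by (simp add: C card_image)
qed

lemma fixed_if_image_fixed: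
  assumes "(s ^^ n) x = x" and "0 < n" and "s (s x) = s x"
  shows "s x = x"
proof -
  obtain q where "n = Suc q"
    using \<open>0 < n\<close> gr0_implies_Suc by blast
  have "(s ^^ j) (s x) = s x" for j
    using \<open>s (s x) = s x\<close> by (induction j) simp_all
  then have "(s ^^ n) x = s x"
    by (simp only: \<open>n = Suc q\<close> funpow_Suc_right comp_apply)
  then show ?thesis
    using assms(1) by simp
qed

lemma prime_dvd_card_non_fixed_points:
  assumes fin: "finite X" and closed: "s ` X \<subseteq> X" and "prime p"
    and period: "\<And>x. x \<in> X \<Longrightarrow> (s ^^ p) x = x"
  shows "p dvd card {x \<in> X. s x \<noteq> x}"
proof (rule period_dvd_card)
  show "0 < p"
    using \<open>prime p\<close> by (simp add: prime_gt_0_nat)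
  then show "s ` {x \<in> X. s x \<noteq> x} \<subseteq> {x \<in> X. s x \<noteq> x}"
    using closed fixed_if_image_fixed [OF period] by blast
  show "finite {x \<in> X. s x \<noteq> x}"
    using fin by simp
  show "(s ^^ p) x = x" if "x \<in> {x \<in> X. s x \<noteq> x}" for x
    using that period by simp
  show "(s ^^ k) x \<noteq> x" if x: "x \<in> {x \<in> X. s x \<noteq> x}" and k: "0 < k" "k < p" for x k
  proof
    assume "(s ^^ k) x = x"
    have "\<not> p dvd k"
      using k by (auto dest: dvd_imp_le)
    then have "coprime k p"
      using prime_imp_coprime [OF \<open>prime p\<close>] coprime_commute by blast
    then have "s x = x"
      using funpow_gcd_fixpoint [OF \<open>(s ^^ k) x = x\<close> period] x by simp
    with x show False
      by simp
  qed
qed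

lemma prime_dvd_card_fixed_points:
  assumes fin: "finite X" and closed: "s ` X \<subseteq> X" and "prime p"
    and period: "\<And>x. x \<in> X \<Longrightarrow> (s ^^ p) x = x" and "p dvd card X"
  shows "p dvd card {x \<in> X. s x = x}"
proof -
  have "card X = card ({x \<in> X. s x = x} \<union> {x \<in> X. s x \<noteq> x})"
    by (rule arg_cong [where f = card]) blast
  also have "\<dots> = card {x \<in> X. s x = x} + card {x \<in> X. s x \<noteq> x}"
    by (rule card_Un_disjoint) (use fin in auto)
  finally show ?thesis
    using \<open>p dvd card X\<close> prime_dvd_card_non_fixed_points [OF assms(1-4)]
    by (simp add: dvd_add_left_iff)
qed

lemma rotate1_eq_self_iff: "rotate1 xs = xs \<longleftrightarrow> xs = replicate (length xs) (hd xs)"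
proof
  assume "rotate1 xs = xs"
  then have "xs = [] \<or> card (set xs) = 1"
    by (rule rotate1_fixpoint_card)
  then have "\<forall>y \<in> set xs. y = hd xs"
    by (cases xs) (auto simp: card_Suc_eq)
  then show "xs = replicate (length xs) (hd xs)"
    by (simp add: replicate_length_same)
next
  assume "xs = replicate (length xs) (hd xs)"
  then show "rotate1 xs = xs"
    using rotate1_replicate by metis
qed

lemma loop_pow_eq_funpow: "loop_pow m e x n = ((\<lambda>y. m y x) ^^ n) e"
  by (induction n) simp_all

lemma loop_pow_mod:
  assumes "loop_pow m e x n = e"
  shows "loop_pow m e x (k mod n) = loop_pow m e x k"
  using assms by (simp add: loop_pow_eq_funpow funpow_mod_eq)

lemma foldl_replicate_eq_loop_pow: "foldl m e (replicate n x) = loop_pow m e x n"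
  by (induction n) (simp_all flip: replicate_append_same)

locale loop_on =
  fixes Q :: "'a set" and m :: "'a \<Rightarrow> 'a \<Rightarrow> 'a" and e :: 'a
  assumes loop: "loop Q m e"
begin

lemma unit_closed [simp]: "e \<in> Q"
  and mult_closed [simp]: "x \<in> Q \<Longrightarrow> y \<in> Q \<Longrightarrow> m x y \<in> Q"
  and left_unit [simp]: "x \<in> Q \<Longrightarrow> m e x = x"
  and right_unit [simp]: "x \<in> Q \<Longrightarrow> m x e = x"
  using loop by (auto simp: loop_def)

lemma left_translation_bij: "x \<in> Q \<Longrightarrow> bij_betw (m x) Q Q"
  and right_translation_bij: "x \<in> Q \<Longrightarrow> bij_betw (\<lambda>y. m y x) Q Q"
  using loop by (simp_all add: loop_def)

lemma left_cancel: "x \<in> Q \<Longrightarrow> y \<in> Q \<Longrightarrow> z \<in> Q \<Longrightarrow> m x y = m x z \<longleftrightarrow> y = z"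
  using left_translation_bij [THEN bij_betw_imp_inj_on, THEN inj_on_eq_iff] by simp

lemma right_cancel: "x \<in> Q \<Longrightarrow> y \<in> Q \<Longrightarrow> z \<in> Q \<Longrightarrow> m y x = m z x \<longleftrightarrow> y = z"
  using right_translation_bij [THEN bij_betw_imp_inj_on, THEN inj_on_eq_iff] by simp

definition rinv :: "'a \<Rightarrow> 'a" where
  "rinv x = the_inv_into Q (m x) e"

lemma rinv_closed [simp]: "x \<in> Q \<Longrightarrow> rinv x \<in> Q"
  and right_inverse [simp]: "x \<in> Q \<Longrightarrow> m x (rinv x) = e"
  using left_translation_bij unfolding rinv_def
  by (simp_all add: the_inv_into_into bij_betw_def f_the_inv_into_f_bij_betw)

lemma eq_rinv_iff: "x \<in> Q \<Longrightarrow> y \<in> Q \<Longrightarrow> m x y = e \<longleftrightarrow> y = rinv x"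
  using left_cancel [of x y "rinv x"] by force

lemma pow_closed [simp]: "x \<in> Q \<Longrightarrow> loop_pow m e x n \<in> Q"
  by (induction n) simp_all

lemma unit_pow [simp]: "loop_pow m e e n = e"
  by (induction n) simp_all

lemma foldl_closed: "set xs \<subseteq> Q \<Longrightarrow> foldl m e xs \<in> Q"
  by (induction xs rule: rev_induct) auto

definition unit_product_lists :: "nat \<Rightarrow> 'a list set" where
  "unit_product_lists n = {xs. set xs \<subseteq> Q \<and> length xs = n \<and> foldl m e xs = e}"

lemma card_unit_product_lists:
  assumes "finite Q"
  shows "card (unit_product_lists (Suc n)) = card Q ^ n"
proof -
  have bij: "bij_betw (\<lambda>xs. xs @ [rinv (foldl m e xs)])
          {xs. set xs \<subseteq> Q \<and> length xs = n} (unit_product_lists (Suc n))"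
  proof (rule bij_betw_byWitness [where f' = butlast])
    show "(\<lambda>xs. xs @ [rinv (foldl m e xs)]) ` {xs. set xs \<subseteq> Q \<and> length xs = n}
        \<subseteq> unit_product_lists (Suc n)"
      by (auto simp: unit_product_lists_def foldl_closed)
    show "\<forall>ys \<in> unit_product_lists (Suc n). butlast ys @ [rinv (foldl m e (butlast ys))] = ys"
    proof
      fix ys assume ys: "ys \<in> unit_product_lists (Suc n)"
      then obtain xs z where ys_eq: "ys = xs @ [z]"
        by (cases ys rule: rev_cases) (auto simp: unit_product_lists_def)
      with ys have "m (foldl m e xs) z = e" and xs: "set xs \<subseteq> Q" and "z \<in> Q"
        by (auto simp: unit_product_lists_def)
      then have "z = rinv (foldl m e xs)"
        using eq_rinv_iff [OF foldl_closed [OF xs]] by simp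
      then show "butlast ys @ [rinv (foldl m e (butlast ys))] = ys"
        by (simp add: ys_eq)
    qed
  qed (auto simp: unit_product_lists_def dest: in_set_butlastD)
  show ?thesis
    using bij_betw_same_card [OF bij] card_lists_length_eq [OF assms] by simp
qed

end

locale moufang_loop_on = loop_on +
  assumes moufang: "x \<in> Q \<Longrightarrow> y \<in> Q \<Longrightarrow> z \<in> Q \<Longrightarrow> m (m x y) (m z x) = m (m x (m y z)) x"
begin

lemma flexible: "x \<in> Q \<Longrightarrow> y \<in> Q \<Longrightarrow> m x (m y x) = m (m x y) x"
  using moufang [of x e y] by simp

lemma left_inverse [simp]:
  assumes "x \<in> Q"
  shows "m (rinv x) x = e"
proof -
  have "m (m x (m (rinv x) x)) x = m x x"
    using moufang [of x "rinv x" x] assms by simp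
  then have "m x (m (rinv x) x) = m x e"
    using assms by (simp add: right_cancel)
  then show ?thesis
    using left_cancel [of x "m (rinv x) x" e] assms by simp
qed

lemma rinv_rinv [simp]: "x \<in> Q \<Longrightarrow> rinv (rinv x) = x"
  using eq_rinv_iff [of "rinv x" x] by simp

lemma left_inverse_property [simp]:
  assumes "x \<in> Q" "y \<in> Q"
  shows "m (rinv x) (m x y) = y"
proof -
  have "m (m (rinv x) x) (m y (rinv x)) = m (m (rinv x) (m x y)) (rinv x)"
    using moufang [of "rinv x" x y] assms by simp
  then show ?thesis
    using assms by (simp add: right_cancel)
qed

lemma left_inverse_property' [simp]: "x \<in> Q \<Longrightarrow> y \<in> Q \<Longrightarrow> m x (m (rinv x) y) = y"
  using left_inverse_property [of "rinv x" y] by simp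

lemma right_inverse_property [simp]:
  assumes "x \<in> Q" "y \<in> Q"
  shows "m (m y x) (rinv x) = y"
proof -
  have "m (m x (m y x)) (m (rinv x) x) = m (m x (m (m y x) (rinv x))) x"
    using moufang [of x "m y x" "rinv x"] assms by simp
  then have "m (m x y) x = m (m x (m (m y x) (rinv x))) x"
    using assms by (simp add: flexible)
  then show ?thesis
    using assms by (simp add: left_cancel right_cancel)
qed

lemma rinv_mult:
  assumes "x \<in> Q" "y \<in> Q"
  shows "rinv (m x y) = m (rinv y) (rinv x)"
proof -
  have "m (rinv (m x y)) x = rinv y"
    using left_inverse_property [of "m x y" "rinv y"] assms by simp
  then show ?thesis
    using right_inverse_property [of x "rinv (m x y)"] assms by simp
qed

lemma product_eq_unit_commute: "x \<in> Q \<Longrightarrow> y \<in> Q \<Longrightarrow> m x y = e \<Longrightarrow> m y x = e"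
  by (simp add: eq_rinv_iff)

lemma product_eq_unit_rotate:
  assumes "x \<in> Q" "y \<in> Q" "z \<in> Q" "m (m x y) z = e"
  shows "m (m y z) x = e"
proof -
  have "z = m (rinv y) (rinv x)"
    using assms by (simp add: eq_rinv_iff rinv_mult)
  then show ?thesis
    using assms by simp
qed

lemma right_moufang:
  assumes "x \<in> Q" "y \<in> Q" "z \<in> Q"
  shows "m (m (m x y) z) y = m x (m (m y z) y)"
proof -
  define b where "b = m x y"
  have b: "b \<in> Q" "rinv (m y (rinv b)) = x"
    using assms by (simp_all add: b_def rinv_mult)
  have "m (m y (rinv b)) (m (m b z) y) = m (m y (m (rinv b) (m b z))) y"
    using moufang [of y "rinv b" "m b z"] assms b by simp
  also have "\<dots> = m y (m z y)"
    using assms b by (simp add: flexible)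
  finally have "m (m b z) y = m x (m y (m z y))"
    using left_inverse_property [of "m y (rinv b)" "m (m b z) y"] assms b by simp
  then show ?thesis
    using assms by (simp add: b_def flexible)
qed

lemma right_translation_pow:
  assumes "x \<in> Q"
  shows "y \<in> Q \<Longrightarrow> m y (loop_pow m e x n) = ((\<lambda>z. m z x) ^^ n) y"
proof (induction n arbitrary: y rule: induct_nat_012)
  case (ge2 n)
  have "loop_pow m e x (Suc n) = ((\<lambda>z. m z x) ^^ n) x"
    using assms by (simp add: loop_pow_eq_funpow funpow_Suc_right del: funpow.simps)
  then have "m x (loop_pow m e x n) = loop_pow m e x (Suc n)"
    using ge2.IH(1) [of x] assms by simp
  then have "m y (loop_pow m e x (Suc (Suc n))) = m (m (m y x) (loop_pow m e x n)) x"
    using right_moufang [of y x "loop_pow m e x n"] ge2.prems assms by simp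
  also have "\<dots> = ((\<lambda>z. m z x) ^^ Suc (Suc n)) y"
    using ge2.IH(1) [of "m y x"] funpow_swap1 [of "\<lambda>z. m z x" n y] ge2.prems assms by simp
  finally show ?case .
qed (use assms in simp_all)

lemma pow_add:
  assumes "x \<in> Q"
  shows "m (loop_pow m e x k) (loop_pow m e x n) = loop_pow m e x (k + n)"
proof -
  have "m (loop_pow m e x k) (loop_pow m e x n) = ((\<lambda>z. m z x) ^^ n) (loop_pow m e x k)"
    using assms by (simp add: right_translation_pow)
  also have "\<dots> = loop_pow m e x (k + n)"
    by (simp add: loop_pow_eq_funpow add.commute [of k] funpow_add)
  finally show ?thesis .
qed

lemma pow_mult: "x \<in> Q \<Longrightarrow> loop_pow m e (loop_pow m e x k) n = loop_pow m e x (k * n)"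
  by (induction n) (simp_all add: pow_add add.commute)

lemma exists_pow_eq_unit:
  assumes "finite Q" "x \<in> Q"
  shows "\<exists>n>0. loop_pow m e x n = e"
proof -
  have "range (loop_pow m e x) \<subseteq> Q"
    using assms by auto
  then have "finite (range (loop_pow m e x))"
    using \<open>finite Q\<close> by (rule finite_subset)
  then have "\<not> inj (loop_pow m e x)"
    using finite_imageD infinite_UNIV_nat by blast
  then obtain i j where "i < j" and ij: "loop_pow m e x i = loop_pow m e x j"
    by (metis inj_on_def linorder_neqE_nat)
  have "m (loop_pow m e x i) (loop_pow m e x (j - i)) = loop_pow m e x j"
    using \<open>i < j\<close> assms by (simp add: pow_add)
  also have "\<dots> = m (loop_pow m e x i) e"
    using ij assms by simp
  finally have "m (loop_pow m e x i) (loop_pow m e x (j - i)) = m (loop_pow m e x i) e" .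
  then have "loop_pow m e x (j - i) = e"
    using assms by (simp only: left_cancel pow_closed unit_closed)
  then show ?thesis
    using \<open>i < j\<close> by (intro exI [of _ "j - i"]) simp
qed

lemma order_dvd_card:
  assumes "finite Q" "x \<in> Q"
  shows "\<exists>n>0. loop_pow m e x n = e \<and> n dvd card Q"
proof -
  define n where "n = (LEAST n. 0 < n \<and> loop_pow m e x n = e)"
  have n: "0 < n" "loop_pow m e x n = e"
    using LeastI_ex [OF exists_pow_eq_unit [OF assms]] by (simp_all add: n_def)
  have "n dvd card Q"
  proof (rule period_dvd_card)
    show "((\<lambda>z. m z x) ^^ k) y \<noteq> y" if "y \<in> Q" "0 < k" "k < n" for y k
    proof -
      have "loop_pow m e x k \<noteq> e"
        using not_less_Least [of k] that by (auto simp: n_def)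
      then show ?thesis
        using that assms left_cancel [of y "loop_pow m e x k" e]
        by (simp flip: right_translation_pow)
    qed
  qed (use assms n in \<open>auto simp flip: right_translation_pow\<close>)
  with n show ?thesis by blast
qed

lemma rotate1_unit_product_lists:
  assumes "p \<in> {2, 3}" "xs \<in> unit_product_lists p"
  shows "rotate1 xs \<in> unit_product_lists p"
proof -
  have "length xs = 2 \<or> length xs = 3"
    using assms by (auto simp: unit_product_lists_def)
  then consider x y where "xs = [x, y]" | x y z where "xs = [x, y, z]"
    by (auto simp: numeral_eq_Suc length_Suc_conv)
  then show ?thesis
  proof cases
    case (1 x y)
    then show ?thesis
      using assms(2) product_eq_unit_commute [of x y] by (auto simp: unit_product_lists_def)
  next
    case (2 x y z)
    then show ?thesis
      using assms(2) product_eq_unit_rotate [of x y z] by (auto simp: unit_product_lists_def)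
  qed
qed

lemma fixed_unit_product_lists:
  assumes "0 < p"
  shows "{xs \<in> unit_product_lists p. rotate1 xs = xs}
    = (\<lambda>x. replicate p x) ` {x \<in> Q. loop_pow m e x p = e}"
proof (intro equalityI subsetI)
  fix xs assume "xs \<in> {xs \<in> unit_product_lists p. rotate1 xs = xs}"
  then have xs: "set xs \<subseteq> Q" "length xs = p" "foldl m e xs = e" "rotate1 xs = xs"
    by (simp_all add: unit_product_lists_def)
  then have "xs = replicate p (hd xs)"
    using rotate1_eq_self_iff by metis
  moreover have "hd xs \<in> Q"
    using xs assms by (metis hd_in_set length_greater_0_conv subsetD)
  ultimately show "xs \<in> (\<lambda>x. replicate p x) ` {x \<in> Q. loop_pow m e x p = e}"
    using xs(3) by (metis (mono_tags, lifting) foldl_replicate_eq_loop_pow mem_Collect_eq rev_image_eqI)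
qed (auto simp: unit_product_lists_def foldl_replicate_eq_loop_pow rotate1_replicate)

lemma dvd_card_pow_eq_unit:
  assumes "finite Q" "p \<in> {2, 3}" "p dvd card Q"
  shows "p dvd card {x \<in> Q. loop_pow m e x p = e}"
proof -
  define X where "X = unit_product_lists p"
  have "prime p" "0 < p"
    using assms(2) by auto
  have "X \<subseteq> {xs. set xs \<subseteq> Q \<and> length xs = p}"
    by (auto simp: X_def unit_product_lists_def)
  then have fin: "finite X"
    using finite_lists_length_eq [OF \<open>finite Q\<close>] by (rule finite_subset)
  have "card X = card Q ^ (p - 1)"
    using card_unit_product_lists [OF \<open>finite Q\<close>, of "p - 1"] \<open>0 < p\<close> by (simp add: X_def)
  moreover have "card Q dvd card Q ^ (p - 1)"
    using assms(2) by (auto intro: dvd_power)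
  ultimately have "p dvd card X"
    using assms(3) dvd_trans by metis
  have "p dvd card {xs \<in> X. rotate1 xs = xs}"
  proof (rule prime_dvd_card_fixed_points [OF fin _ \<open>prime p\<close> _ \<open>p dvd card X\<close>])
    show "rotate1 ` X \<subseteq> X"
      using rotate1_unit_product_lists assms(2) by (auto simp: X_def)
    show "(rotate1 ^^ p) xs = xs" if "xs \<in> X" for xs
      using that by (simp add: X_def unit_product_lists_def flip: rotate_def)
  qed
  moreover have "card {xs \<in> X. rotate1 xs = xs} = card {x \<in> Q. loop_pow m e x p = e}"
    using fixed_unit_product_lists [OF \<open>0 < p\<close>] \<open>0 < p\<close>
    by (simp add: X_def card_image inj_on_def)
  ultimately show ?thesis
    by simp
qed

lemma exists_nontrivial_pow_eq_unit:
  assumes "finite Q" "p \<in> {2, 3}" "p dvd card Q"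
  shows "\<exists>x \<in> Q. x \<noteq> e \<and> loop_pow m e x p = e"
proof (rule ccontr)
  assume "\<not> ?thesis"
  then have "{x \<in> Q. loop_pow m e x p = e} = {e}"
    by auto
  then show False
    using dvd_card_pow_eq_unit [OF assms] assms(2) by auto
qed

lemma uniquely_divisible_if_coprime:
  assumes "finite Q" "0 < d" "coprime (card Q) d"
  shows "uniquely_divisible Q m e d"
proof -
  have "y \<in> (\<lambda>x. loop_pow m e x d) ` Q" if y: "y \<in> Q" for y
  proof -
    obtain n where n: "0 < n" "loop_pow m e y n = e" "n dvd card Q"
      using order_dvd_card [OF assms(1) y] by blast
    then have "coprime d n"
      using assms(3) coprime_commute coprime_divisors dvd_refl by metis
    then obtain u v where "d * u = n * v + 1"
      using bezout_nat [of d n] assms(2) by auto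
    then have "loop_pow m e (loop_pow m e y u) d = loop_pow m e y (n * v + 1)"
      using y by (simp add: pow_mult mult.commute)
    also have "\<dots> = loop_pow m e y ((n * v + 1) mod n)"
      using loop_pow_mod [OF n(2)] by simp
    also have "\<dots> = loop_pow m e y (1 mod n)"
      by (simp only: mod_mult_self4)
    also have "\<dots> = y"
      using y loop_pow_mod [OF n(2), of 1] by simp
    finally show ?thesis
      using y by (metis imageI pow_closed)
  qed
  then have "(\<lambda>x. loop_pow m e x d) ` Q = Q"
    by auto
  then show ?thesis
    using assms(1) by (simp add: uniquely_divisible_def bij_betw_def eq_card_imp_inj_on)
qed

lemma not_uniquely_divisible_if_dvd:
  assumes "finite Q" "p \<in> {2, 3}" "p dvd card Q" "p dvd d"
  shows "\<not> uniquely_divisible Q m e d"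
proof
  assume "uniquely_divisible Q m e d"
  then have inj: "inj_on (\<lambda>x. loop_pow m e x d) Q"
    by (simp add: uniquely_divisible_def bij_betw_def)
  obtain x where x: "x \<in> Q" "x \<noteq> e" "loop_pow m e x p = e"
    using exists_nontrivial_pow_eq_unit [OF assms(1-3)] by blast
  then have "loop_pow m e x d = loop_pow m e e d"
    using loop_pow_mod [OF x(3), of d] assms(4) by simp
  then show False
    using inj_onD [OF inj] x by simp
qed

end

lemma not_coprime_two_three_powers:
  fixes n a b :: nat
  assumes "\<not> coprime n (2 ^ a * 3 ^ b)"
  shows "\<exists>p \<in> {2, 3}. p dvd n \<and> p dvd 2 ^ a * 3 ^ b"
proof (rule ccontr)
  assume none: "\<not> ?thesis"
  have "coprime n (2 ^ a)"
  proof (cases "a = 0")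
    case False
    then have "\<not> 2 dvd n"
      using none by (auto simp: dvd_power)
    then show ?thesis
      by (intro prime_imp_power_coprime) simp_all
  qed simp
  moreover have "coprime n (3 ^ b)"
  proof (cases "b = 0")
    case False
    then have "\<not> 3 dvd n"
      using none by (auto simp: dvd_power)
    then show ?thesis
      by (intro prime_imp_power_coprime) simp_all
  qed simp
  ultimately show False
    using assms by simp
qed

theorem proposition1p13:
  fixes Q :: "'a set" and m :: "'a \<Rightarrow> 'a \<Rightarrow> 'a" and e :: 'a and a b d :: nat
  assumes "moufang_loop Q m e" and "finite Q"
    and "d = 2 ^ a * 3 ^ b" and "d > 1"
  shows "uniquely_divisible Q m e d \<longleftrightarrow> coprime (card Q) d"
proof -
  interpret moufang_loop_on Q m e
    using assms(1) by unfold_locales (simp_all add: moufang_loop_def)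
  show ?thesis
  proof
    assume "uniquely_divisible Q m e d"
    then show "coprime (card Q) d"
      using not_coprime_two_three_powers [of "card Q" a b] not_uniquely_divisible_if_dvd [OF assms(2)] assms(3)
      by blast
  next
    assume "coprime (card Q) d"
    then show "uniquely_divisible Q m e d"
      using uniquely_divisible_if_coprime [OF assms(2)] assms(4) by simp
  qed
qed

end
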